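(* Let $\eta_1,\eta_2,\dots$ be iid with $\Pr(\eta_1\le x)=e^x$, $x\le0$, and let $1\le j<k<r$ be integers. Then for all $x_1<x_2<x_3\le 0$, \[ \Pr(\eta_j\le x_1,\eta_k\le x_2,\eta_r\le x_3\mid \eta_j,\eta_k,\eta_r\text{ are records}) =\frac{kr}{(k-j)(r-k)}\left(e^{jx_1}\Big(e^{(r-k)x_3}e^{(k-j)x_2}-\frac{k-j}{r-j}e^{(r-j)x_2}\Big)-\frac{j}{k}e^{kx_1}e^{(r-k)x_3}+\frac{j(k-j)}{r(r-j)}e^{rx_1}\right). \]
   Context: $\eta_m$ is a record if $\eta_m>\max(\eta_1,\dots,\eta_{m-1})$; $\eta_1$ is always a record. *)

theory Defs
  imports "HOL-Probability.Probability"
begin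

text \<open>The sequence is indexed from 1: eta 1, eta 2, ...  Index m is a record
  at outcome w iff eta m w exceeds all earlier values eta 1 w, ..., eta (m-1) w
  (vacuous for m = 1).\<close>
definition is_record :: "(nat \<Rightarrow> 'a \<Rightarrow> real) \<Rightarrow> nat \<Rightarrow> 'a \<Rightarrow> bool" where
  "is_record \<eta> m \<omega> \<longleftrightarrow> (\<forall>i\<in>{1..<m}. \<eta> i \<omega> < \<eta> m \<omega>)"

end

theory Submission
  imports Defs
begin

text \<open>The variables \<open>U i = exp (\<eta> i)\<close> are independent and uniform on \<open>[0, 1]\<close>, and
  \<open>m\<close> is a record iff \<open>U m\<close> exceeds the running maximum of \<open>U 1, \<dots>, U (m - 1)\<close>.
  Fix thresholds \<open>t m\<close> for the indices \<open>m\<close> in \<open>S = {j, k, r}\<close>, and let \<open>G n y\<close> be the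
  probability that every \<open>m \<in> S\<close> with \<open>m \<le> n\<close> is a record with value at most \<open>t m\<close> and that
  the running maximum after \<open>n\<close> steps is below \<open>y\<close>. As \<open>U (n + 1)\<close> is independent of the
  past, \<open>G (n + 1) y = y * G n y\<close> for \<open>n + 1 \<notin> S\<close>, while for \<open>n + 1 \<in> S\<close> conditioning on
  the value \<open>v\<close> of \<open>U (n + 1)\<close> gives \<open>G (n + 1) y = \<integral> G n v dv\<close> over \<open>[0, min (t (n + 1)) y]\<close>.
  Iterating produces integrals of piecewise polynomials. The numerator of the conditional
  probability is this quantity for the thresholds \<open>exp x1, exp x2, exp x3\<close>; since \<open>\<eta> \<le> 0\<close>
  almost surely, the denominator is the one for thresholds \<open>1\<close>, which equals \<open>1 / (j k r)\<close>.\<close>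

lemma has_integral_power_pred:
  fixes u w :: real
  assumes "0 < m" "u \<le> w"
  shows "((\<lambda>v. v ^ (m - 1)) has_integral (w ^ m - u ^ m) / m) {u..w}"
proof -
  have "((\<lambda>v. v ^ m / m) has_real_derivative v ^ (m - 1)) (at v within {u..w})" for v :: real
    using assms by (auto intro!: derivative_eq_intros)
  then have "((\<lambda>v. v ^ (m - 1)) has_integral w ^ m / m - u ^ m / m) {u..w}"
    by (intro fundamental_theorem_of_calculus assms)
       (simp add: has_real_derivative_iff_has_vector_derivative)
  then show ?thesis
    by (simp add: diff_divide_distrib)
qed

definition two_records_prob :: "nat \<Rightarrow> nat \<Rightarrow> real \<Rightarrow> real \<Rightarrow> real" where
  "two_records_prob j k a z =
     (if z \<le> a then z ^ k / (real j * real k)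
      else a ^ j * z ^ (k - j) / (real j * real (k - j)) - a ^ k / (real k * real (k - j)))"

definition three_records_prob :: "nat \<Rightarrow> nat \<Rightarrow> nat \<Rightarrow> real \<Rightarrow> real \<Rightarrow> real \<Rightarrow> real" where
  "three_records_prob j k r a b c =
     (a ^ j * b ^ (k - j) * c ^ (r - k) - real (k - j) / real (r - j) * a ^ j * b ^ (r - j)
      - real j / real k * a ^ k * c ^ (r - k) + real j * real (k - j) / (real r * real (r - j)) * a ^ r)
     / (real j * real (k - j) * real (r - k))"

lemma two_records_prob_ge:
  assumes "1 \<le> j" "j < k" "a \<le> z"
  shows "two_records_prob j k a z = a ^ j * z ^ (k - j) / (real j * real (k - j)) - a ^ k / (real k * real (k - j))"
proof (cases "z = a")
  case True
  obtain p where p: "k = j + p" "0 < p"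
    using assms by (metis add_diff_inverse_nat less_imp_add_positive)
  show ?thesis
    using True assms unfolding two_records_prob_def p
    by (simp add: power_add divide_simps) (simp add: algebra_simps)
qed (use assms in \<open>simp add: two_records_prob_def\<close>)

lemma has_integral_two_records_prob:
  assumes "1 \<le> j" "j < k" "0 < a" "0 \<le> z"
  shows "((\<lambda>v. min a v ^ j / j * v ^ (k - 1 - j)) has_integral two_records_prob j k a z) {0..z}"
proof -
  have below: "((\<lambda>v. min a v ^ j / j * v ^ (k - 1 - j)) has_integral y ^ k / (real j * real k)) {0..y}"
    if "0 \<le> y" "y \<le> a" for y
  proof -
    have "((\<lambda>v. v ^ (k - 1) / j) has_integral y ^ k / (real j * real k)) {0..y}"
      using has_integral_divide[OF has_integral_power_pred[of k 0 y], of j] that assms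
      by (simp add: zero_power mult.commute)
    then show ?thesis
      by (rule has_integral_eq[rotated])
         (use that assms in \<open>auto simp: min_absorb2 simp flip: power_add\<close>)
  qed
  show ?thesis
  proof (cases "z \<le> a")
    case True
    then show ?thesis
      using below[OF \<open>0 \<le> z\<close>] by (simp add: two_records_prob_def)
  next
    case False
    have "((\<lambda>v. a ^ j / j * v ^ (k - j - 1)) has_integral a ^ j / j * ((z ^ (k - j) - a ^ (k - j)) / (k - j))) {a..z}"
      using False assms by (intro has_integral_mult_right has_integral_power_pred) auto
    then have above: "((\<lambda>v. min a v ^ j / j * v ^ (k - 1 - j))
        has_integral a ^ j / j * ((z ^ (k - j) - a ^ (k - j)) / (k - j))) {a..z}"
      by (rule has_integral_eq[rotated]) (auto simp: diff_commute[of k 1])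
    have "((\<lambda>v. min a v ^ j / j * v ^ (k - 1 - j))
        has_integral a ^ k / (real j * real k) + a ^ j / j * ((z ^ (k - j) - a ^ (k - j)) / (k - j))) {0..z}"
      using False assms by (intro has_integral_combine[OF _ _ below above]) auto
    moreover obtain p where "k = j + p" "0 < p"
      using assms by (metis add_diff_inverse_nat less_imp_add_positive)
    ultimately show ?thesis
      using False assms unfolding two_records_prob_def
      by (simp add: power_add divide_simps) (simp add: algebra_simps)
  qed
qed

lemma has_integral_three_records_prob:
  assumes "1 \<le> j" "j < k" "k < r" "0 < a" "a \<le> b" "b \<le> c"
  shows "((\<lambda>v. two_records_prob j k a (min b v) * v ^ (r - 1 - k))
           has_integral three_records_prob j k r a b c) {0..c}"
proof -
  let ?f = "\<lambda>v. two_records_prob j k a (min b v) * v ^ (r - 1 - k)"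
  have "((\<lambda>v. v ^ (r - 1) / (real j * real k)) has_integral a ^ r / (real j * real k * real r)) {0..a}"
    using has_integral_divide[OF has_integral_power_pred[of r 0 a], of "real j * real k"] assms
    by (simp add: zero_power mult.commute)
  then have low: "(?f has_integral a ^ r / (real j * real k * real r)) {0..a}"
    by (rule has_integral_eq[rotated])
       (use assms in \<open>auto simp: two_records_prob_def min_absorb2 simp flip: power_add\<close>)
  have "((\<lambda>v. a ^ j / (real j * real (k - j)) * v ^ (r - j - 1) - a ^ k / (real k * real (k - j)) * v ^ (r - k - 1))
      has_integral a ^ j / (real j * real (k - j)) * ((b ^ (r - j) - a ^ (r - j)) / (r - j))
                 - a ^ k / (real k * real (k - j)) * ((b ^ (r - k) - a ^ (r - k)) / (r - k))) {a..b}"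
    using assms by (intro has_integral_diff has_integral_mult_right has_integral_power_pred) auto
  then have middle: "(?f has_integral a ^ j / (real j * real (k - j)) * ((b ^ (r - j) - a ^ (r - j)) / (r - j))
      - a ^ k / (real k * real (k - j)) * ((b ^ (r - k) - a ^ (r - k)) / (r - k))) {a..b}"
  proof (rule has_integral_eq[rotated])
    fix v assume "v \<in> {a..b}"
    moreover have "v ^ (k - j) * v ^ (r - 1 - k) = v ^ (r - j - 1)"
      using assms by (simp flip: power_add)
    ultimately show "a ^ j / (real j * real (k - j)) * v ^ (r - j - 1) - a ^ k / (real k * real (k - j)) * v ^ (r - k - 1)
        = ?f v"
      using assms by (auto simp: two_records_prob_ge min_absorb2 algebra_simps diff_commute[of r 1])
  qed
  have "((\<lambda>v. two_records_prob j k a b * v ^ (r - k - 1))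
      has_integral two_records_prob j k a b * ((c ^ (r - k) - b ^ (r - k)) / (r - k))) {b..c}"
    using assms by (intro has_integral_mult_right has_integral_power_pred) auto
  then have high: "(?f has_integral two_records_prob j k a b * ((c ^ (r - k) - b ^ (r - k)) / (r - k))) {b..c}"
    by (rule has_integral_eq[rotated]) (auto simp: diff_commute[of r 1])
  have "(?f has_integral a ^ r / (real j * real k * real r)
      + (a ^ j / (real j * real (k - j)) * ((b ^ (r - j) - a ^ (r - j)) / (r - j))
         - a ^ k / (real k * real (k - j)) * ((b ^ (r - k) - a ^ (r - k)) / (r - k)))
      + two_records_prob j k a b * ((c ^ (r - k) - b ^ (r - k)) / (r - k))) {0..c}"
    using assms by (intro has_integral_combine[OF _ _ has_integral_combine[OF _ _ low middle] high]) auto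
  moreover obtain p q where "k = j + p" "r = j + p + q" "0 < p" "0 < q"
    using assms by (metis add_diff_inverse_nat less_imp_add_positive)
  ultimately show ?thesis
    using assms unfolding two_records_prob_ge[OF \<open>1 \<le> j\<close> \<open>j < k\<close> \<open>a \<le> b\<close>] three_records_prob_def
    by (simp add: power_add divide_simps) (simp add: algebra_simps)
qed

lemma three_records_prob_ratio:
  assumes "1 \<le> j" "j < k" "k < r"
  shows "three_records_prob j k r a b c / three_records_prob j k r 1 1 1 =
     real k * real r / (real (k - j) * real (r - k)) *
      (a ^ j * (c ^ (r - k) * b ^ (k - j) - real (k - j) / real (r - j) * b ^ (r - j))
       - real j / real k * a ^ k * c ^ (r - k)
       + real j * real (k - j) / (real r * real (r - j)) * a ^ r)"
proof -
  obtain p q where pq: "k = j + p" "r = j + p + q" "0 < p" "0 < q"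
    using assms by (metis add_diff_inverse_nat less_imp_add_positive)
  have "three_records_prob j k r 1 1 1 = 1 / (real j * real k * real r)"
    using assms unfolding three_records_prob_def pq by (simp add: divide_simps) (simp add: algebra_simps)
  then have "three_records_prob j k r a b c / three_records_prob j k r 1 1 1
      = real j * real k * real r * three_records_prob j k r a b c"
    by simp
  also have "\<dots> = real k * real r / (real (k - j) * real (r - k)) *
      (a ^ j * (c ^ (r - k) * b ^ (k - j) - real (k - j) / real (r - j) * b ^ (r - j))
       - real j / real k * a ^ k * c ^ (r - k)
       + real j * real (k - j) / (real r * real (r - j)) * a ^ r)"
    using assms unfolding three_records_prob_def pq by (simp add: divide_simps) (simp add: algebra_simps)
  finally show ?thesis .
qed

lemma (in prob_space) prob_uniform_less:
  fixes V :: "'a \<Rightarrow> real"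
  assumes V: "distributed M lborel V (indicator {0..1})" and "0 \<le> y" "y \<le> 1"
  shows "\<P>(\<omega> in M. V \<omega> < y) = y"
proof -
  have [measurable]: "V \<in> borel_measurable M"
    using V by (simp add: distributed_def)
  have "\<P>(\<omega> in M. V \<omega> < y) = measure (density lborel (indicator {0..1})) {..<y}"
    by (subst distributed_distr_eq_density[OF V, symmetric], subst measure_distr)
       (auto intro!: arg_cong[where f = prob])
  also have "\<dots> = measure lborel ({0..1} \<inter> {..<y})"
    by (simp add: measure_restricted)
  also have "{0..1} \<inter> {..<y} = {0..<y}"
    using assms by auto
  finally show ?thesis
    using assms by simp
qed

lemma (in prob_space) prob_less_indep_uniform:
  fixes X V :: "'a \<Rightarrow> real"
  assumes XV: "indep_var borel X borel V" and V: "distributed M lborel V (indicator {0..1})"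
    and "0 \<le> y" "y \<le> 1"
  shows "\<P>(\<omega> in M. X \<omega> < y \<and> V \<omega> < y) = \<P>(\<omega> in M. X \<omega> < y) * y"
proof -
  have "\<P>(\<omega> in M. X \<omega> < y \<and> V \<omega> < y) = prob ((\<lambda>\<omega>. (X \<omega>, V \<omega>)) -` ({..<y} \<times> {..<y}) \<inter> space M)"
    by (auto intro!: arg_cong[where f = prob])
  also have "\<dots> = prob (X -` {..<y} \<inter> space M) * prob (V -` {..<y} \<inter> space M)"
    by (rule indep_varD[OF XV]) auto
  also have "prob (V -` {..<y} \<inter> space M) = y"
    using prob_uniform_less[OF V \<open>0 \<le> y\<close> \<open>y \<le> 1\<close>] by (simp add: vimage_def Int_def conj_commute)
  finally show ?thesis
    by (simp add: vimage_def Int_def conj_commute)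
qed

lemma (in prob_space) emeasure_less_indep_uniform:
  fixes X V :: "'a \<Rightarrow> real"
  assumes XV: "indep_var borel X borel V" and V: "distributed M lborel V (indicator {0..1})"
    and [measurable]: "I \<in> sets borel"
  shows "emeasure M {\<omega> \<in> space M. X \<omega> < V \<omega> \<and> V \<omega> \<in> I}
     = (\<integral>\<^sup>+ v. indicator ({0..1} \<inter> I) v * emeasure M {\<omega> \<in> space M. X \<omega> < v} \<partial>lborel)"
proof -
  have [measurable]: "X \<in> borel_measurable M" "V \<in> borel_measurable M"
    using indep_var_rv1[OF XV] indep_var_rv2[OF XV] by auto
  interpret PX: prob_space "distr M borel X" by (rule prob_space_distr) simp
  interpret PV: prob_space "distr M borel V" by (rule prob_space_distr) simp
  interpret PP: pair_sigma_finite "distr M borel X" "distr M borel V" ..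
  let ?A = "{p :: real \<times> real. fst p < snd p \<and> snd p \<in> I}"
  have A[measurable]: "?A \<in> sets (borel \<Otimes>\<^sub>M borel)"
  proof -
    have "Measurable.pred (borel \<Otimes>\<^sub>M borel) (\<lambda>p :: real \<times> real. fst p < snd p \<and> snd p \<in> I)"
      by measurable
    then show ?thesis
      by (simp add: pred_def space_pair_measure)
  qed
  have "emeasure M {\<omega> \<in> space M. X \<omega> < V \<omega> \<and> V \<omega> \<in> I}
      = emeasure (distr M (borel \<Otimes>\<^sub>M borel) (\<lambda>\<omega>. (X \<omega>, V \<omega>))) ?A"
    by (subst emeasure_distr) (auto intro!: arg_cong[where f = "emeasure M"])
  also have "\<dots> = emeasure (distr M borel X \<Otimes>\<^sub>M distr M borel V) ?A"
    using XV by (simp add: indep_var_distribution_eq)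
  also have "\<dots> = (\<integral>\<^sup>+v. emeasure (distr M borel X) ((\<lambda>x. (x, v)) -` ?A) \<partial>distr M borel V)"
    by (intro PP.emeasure_pair_measure_alt2) simp
  also have "\<dots> = (\<integral>\<^sup>+v. indicator I v * emeasure M {\<omega> \<in> space M. X \<omega> < v} \<partial>distr M borel V)"
    by (intro nn_integral_cong)
       (auto simp: emeasure_distr vimage_def Int_def conj_commute split: split_indicator)
  also have "distr M borel V = distr M lborel V"
    by (rule distr_cong) auto
  also have "(\<integral>\<^sup>+v. indicator I v * emeasure M {\<omega> \<in> space M. X \<omega> < v} \<partial>distr M lborel V)
      = (\<integral>\<^sup>+v. indicator {0..1} v * (indicator I v * emeasure M {\<omega> \<in> space M. X \<omega> < v}) \<partial>lborel)"
    by (simp add: distributed_distr_eq_density[OF V] nn_integral_density)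
  also have "\<dots> = (\<integral>\<^sup>+ v. indicator ({0..1} \<inter> I) v * emeasure M {\<omega> \<in> space M. X \<omega> < v} \<partial>lborel)"
    by (intro nn_integral_cong) (auto split: split_indicator)
  finally show ?thesis .
qed

lemma (in prob_space) prob_less_indep_uniform_has_integral:
  fixes X V :: "'a \<Rightarrow> real"
  assumes XV: "indep_var borel X borel V" and V: "distributed M lborel V (indicator {0..1})"
    and t: "0 \<le> t" "t \<le> 1"
    and A: "((\<lambda>v. \<P>(\<omega> in M. X \<omega> < v)) has_integral A) {0..min t y}"
  shows "\<P>(\<omega> in M. X \<omega> < V \<omega> \<and> V \<omega> \<le> t \<and> V \<omega> < y) = A"
proof -
  have "emeasure M {\<omega> \<in> space M. X \<omega> < V \<omega> \<and> V \<omega> \<le> t \<and> V \<omega> < y}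
      = (\<integral>\<^sup>+ v. indicator ({0..1} \<inter> {u. u \<le> t \<and> u < y}) v * emeasure M {\<omega> \<in> space M. X \<omega> < v} \<partial>lborel)"
    using emeasure_less_indep_uniform[OF XV V, of "{u. u \<le> t \<and> u < y}"] by simp
  also have "\<dots> = (\<integral>\<^sup>+ v. indicator {0..min t y} v * \<P>(\<omega> in M. X \<omega> < v) \<partial>lborel)"
    \<comment> \<open>the two integrands differ only at \<open>v = y\<close>\<close>
    using t by (intro nn_integral_cong_AE eventually_mono[OF AE_lborel_singleton[of y]])
      (auto simp: emeasure_eq_measure split: split_indicator)
  also have "\<dots> = A"
    using A by (intro nn_integral_has_integral_lebesgue) auto
  finally show ?thesis
    using has_integral_nonneg[OF A] by (simp add: emeasure_eq_measure)
qed

text \<open>Indices start at 1; the maximum of the empty prefix is \<open>0\<close>, a lower bound for the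
  positive variables considered here.\<close>

primrec prefix_max :: "(nat \<Rightarrow> real) \<Rightarrow> nat \<Rightarrow> real" where
  "prefix_max x 0 = 0"
| "prefix_max x (Suc n) = max (prefix_max x n) (x (Suc n))"

lemma prefix_max_cong:
  "(\<And>i. 1 \<le> i \<Longrightarrow> i \<le> n \<Longrightarrow> x i = z i) \<Longrightarrow> prefix_max x n = prefix_max z n"
  by (induction n) auto

lemma prefix_max_less_iff: "prefix_max x n < y \<longleftrightarrow> 0 < y \<and> (\<forall>i\<in>{1..n}. x i < y)"
  by (induction n) (auto simp: le_Suc_eq)

lemma measurable_prefix_max:
  "(\<And>i. 1 \<le> i \<Longrightarrow> i \<le> n \<Longrightarrow> X i \<in> borel_measurable N)
    \<Longrightarrow> (\<lambda>\<omega>. prefix_max (\<lambda>i. X i \<omega>) n) \<in> borel_measurable N"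
  by (induction n) auto

definition capped_records :: "nat set \<Rightarrow> (nat \<Rightarrow> real) \<Rightarrow> (nat \<Rightarrow> real) \<Rightarrow> nat \<Rightarrow> bool" where
  "capped_records S t x n \<longleftrightarrow> (\<forall>m \<in> S \<inter> {1..n}. prefix_max x (m - 1) < x m \<and> x m \<le> t m)"

lemma capped_records_iff:
  "S \<subseteq> {1..n} \<Longrightarrow> capped_records S t x n \<longleftrightarrow> (\<forall>m\<in>S. prefix_max x (m - 1) < x m \<and> x m \<le> t m)"
  by (simp add: capped_records_def Int_absorb2)

lemma capped_records_0 [simp]: "capped_records S t x 0"
  by (simp add: capped_records_def)

lemma capped_records_Suc:
  "capped_records S t x (Suc n) \<longleftrightarrow> capped_records S t x n
     \<and> (Suc n \<in> S \<longrightarrow> prefix_max x n < x (Suc n) \<and> x (Suc n) \<le> t (Suc n))"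
  by (auto simp: capped_records_def atLeastAtMostSuc_conv)

lemma capped_records_cong:
  "(\<And>i. 1 \<le> i \<Longrightarrow> i \<le> n \<Longrightarrow> x i = z i) \<Longrightarrow> capped_records S t x n = capped_records S t z n"
  unfolding capped_records_def using prefix_max_cong[of "_ - 1" x z] by (intro ball_cong) auto

lemma pred_capped_records:
  assumes "\<And>i. 1 \<le> i \<Longrightarrow> i \<le> n \<Longrightarrow> X i \<in> borel_measurable N"
  shows "Measurable.pred N (\<lambda>\<omega>. capped_records S t (\<lambda>i. X i \<omega>) n)"
proof -
  have [measurable]: "(\<lambda>\<omega>. prefix_max (\<lambda>i. X i \<omega>) (m - 1)) \<in> borel_measurable N"
    "X m \<in> borel_measurable N" if "m \<in> S \<inter> {1..n}" for m
    using that assms by (auto intro!: measurable_prefix_max)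
  show ?thesis
    unfolding capped_records_def by measurable
qed

text \<open>Since \<open>2\<close> exceeds every uniform value, \<open>capped_prefix_max S t n x < y\<close> (for \<open>y \<le> 2\<close>)
  encodes the event of interest through a single real function of the first \<open>n\<close> coordinates,
  which makes the independence of the next coordinate usable.\<close>

definition capped_prefix_max :: "nat set \<Rightarrow> (nat \<Rightarrow> real) \<Rightarrow> nat \<Rightarrow> (nat \<Rightarrow> real) \<Rightarrow> real" where
  "capped_prefix_max S t n x = (if capped_records S t x n then prefix_max x n else 2)"

lemma capped_prefix_max_less_iff:
  "y \<le> 2 \<Longrightarrow> capped_prefix_max S t n x < y \<longleftrightarrow> capped_records S t x n \<and> prefix_max x n < y"
  by (simp add: capped_prefix_max_def)

lemma capped_prefix_max_restrict: "capped_prefix_max S t n (restrict x {1..n}) = capped_prefix_max S t n x"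
proof -
  have "capped_records S t (restrict x {1..n}) n = capped_records S t x n"
    by (rule capped_records_cong) simp
  moreover have "prefix_max (restrict x {1..n}) n = prefix_max x n"
    by (rule prefix_max_cong) simp
  ultimately show ?thesis
    by (simp add: capped_prefix_max_def)
qed

lemma measurable_capped_prefix_max:
  "capped_prefix_max S t n \<in> borel_measurable (Pi\<^sub>M {1..n} (\<lambda>_. borel))"
proof -
  have components: "(\<lambda>x. x i) \<in> borel_measurable (Pi\<^sub>M {1..n} (\<lambda>_. borel))" if "1 \<le> i" "i \<le> n" for i
    using that by (intro measurable_component_singleton) auto
  have [measurable]: "Measurable.pred (Pi\<^sub>M {1..n} (\<lambda>_. borel)) (\<lambda>x. capped_records S t x n)"
    using pred_capped_records[of n "\<lambda>i x. x i"] components by simp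
  have [measurable]: "(\<lambda>x. prefix_max x n) \<in> borel_measurable (Pi\<^sub>M {1..n} (\<lambda>_. borel))"
    using measurable_prefix_max[of n "\<lambda>i x. x i"] components by simp
  show ?thesis
    unfolding capped_prefix_max_def by measurable
qed

locale iid_uniform = prob_space +
  fixes U :: "nat \<Rightarrow> 'a \<Rightarrow> real"
  assumes indep_U: "indep_vars (\<lambda>_. borel) U {1..}"
    and uniform_U: "\<And>i. 1 \<le> i \<Longrightarrow> distributed M lborel (U i) (indicator {0..1})"
begin

lemma indep_capped_prefix_max_next:
  "indep_var borel (\<lambda>\<omega>. capped_prefix_max S t n (\<lambda>i. U i \<omega>)) borel (U (Suc n))"
proof -
  have "indep_var (Pi\<^sub>M {1..n} (\<lambda>_. borel)) (\<lambda>\<omega>. restrict (\<lambda>i. U i \<omega>) {1..n})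
     (Pi\<^sub>M {Suc n} (\<lambda>_. borel)) (\<lambda>\<omega>. restrict (\<lambda>i. U i \<omega>) {Suc n})"
    by (rule indep_var_restrict[OF indep_U]) auto
  then have "indep_var borel (capped_prefix_max S t n \<circ> (\<lambda>\<omega>. restrict (\<lambda>i. U i \<omega>) {1..n}))
     borel ((\<lambda>x. x (Suc n)) \<circ> (\<lambda>\<omega>. restrict (\<lambda>i. U i \<omega>) {Suc n}))"
    by (rule indep_var_compose[OF _ measurable_capped_prefix_max measurable_component_singleton]) auto
  then show ?thesis
    unfolding comp_def capped_prefix_max_restrict by simp
qed

definition records_cdf :: "nat set \<Rightarrow> (nat \<Rightarrow> real) \<Rightarrow> nat \<Rightarrow> real \<Rightarrow> real" where
  "records_cdf S t n y =
     \<P>(\<omega> in M. capped_records S t (\<lambda>i. U i \<omega>) n \<and> prefix_max (\<lambda>i. U i \<omega>) n < y)"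

lemma records_cdf_eq_prob_capped_prefix_max:
  "y \<le> 2 \<Longrightarrow> records_cdf S t n y = \<P>(\<omega> in M. capped_prefix_max S t n (\<lambda>i. U i \<omega>) < y)"
  by (simp add: records_cdf_def capped_prefix_max_less_iff)

lemma records_cdf_0: "0 < y \<Longrightarrow> records_cdf S t 0 y = 1"
  by (simp add: records_cdf_def prob_space)

lemma records_cdf_Suc_not_record:
  assumes "Suc n \<notin> S" "0 \<le> y" "y \<le> 1"
  shows "records_cdf S t (Suc n) y = records_cdf S t n y * y"
proof -
  have "records_cdf S t (Suc n) y
      = \<P>(\<omega> in M. capped_prefix_max S t n (\<lambda>i. U i \<omega>) < y \<and> U (Suc n) \<omega> < y)"
    using assms by (auto simp: records_cdf_def capped_records_Suc capped_prefix_max_less_iff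
        intro!: arg_cong[where f = prob])
  also have "\<dots> = records_cdf S t n y * y"
    using assms by (simp add: prob_less_indep_uniform[OF indep_capped_prefix_max_next uniform_U]
        records_cdf_eq_prob_capped_prefix_max)
  finally show ?thesis .
qed

lemma records_cdf_not_records:
  assumes "m \<le> n" "\<And>i. m < i \<Longrightarrow> i \<le> n \<Longrightarrow> i \<notin> S" "0 \<le> y" "y \<le> 1"
  shows "records_cdf S t n y = records_cdf S t m y * y ^ (n - m)"
  using assms
proof (induction n rule: dec_induct)
  case (step n)
  then show ?case
    by (simp add: records_cdf_Suc_not_record Suc_diff_le)
qed simp

lemma records_cdf_record:
  assumes "m \<in> S" "1 \<le> m" "0 \<le> t m" "t m \<le> 1"
    and g: "\<And>v. 0 < v \<Longrightarrow> v \<le> 1 \<Longrightarrow> records_cdf S t (m - 1) v = g v"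
    and A: "(g has_integral A) {0..min (t m) y}"
  shows "records_cdf S t m y = A"
proof -
  obtain n where m: "m = Suc n"
    using \<open>1 \<le> m\<close> by (cases m) auto
  let ?F = "\<lambda>\<omega>. capped_prefix_max S t n (\<lambda>i. U i \<omega>)"
  have event: "capped_records S t x m \<and> prefix_max x m < y
      \<longleftrightarrow> capped_prefix_max S t n x < x m \<and> x m \<le> t m \<and> x m < y" for x
    using assms unfolding m capped_prefix_max_def by (auto simp: capped_records_Suc)
  have integrand: "((\<lambda>v. \<P>(\<omega> in M. ?F \<omega> < v)) has_integral A) {0..min (t m) y}"
  proof (rule has_integral_spike_finite[OF _ _ A])
    fix v assume "v \<in> {0..min (t m) y} - {0}"
    then have "0 < v" "v \<le> 1"
      using assms by auto
    then show "\<P>(\<omega> in M. ?F \<omega> < v) = g v"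
      using g[of v] records_cdf_eq_prob_capped_prefix_max[of v S t n] m by simp
  qed simp
  have "records_cdf S t m y = \<P>(\<omega> in M. ?F \<omega> < U m \<omega> \<and> U m \<omega> \<le> t m \<and> U m \<omega> < y)"
    unfolding records_cdf_def event ..
  also have "\<dots> = A"
  proof -
    have "1 \<le> Suc n" "0 \<le> t (Suc n)" "t (Suc n) \<le> 1"
      using assms m by auto
    from prob_less_indep_uniform_has_integral[OF indep_capped_prefix_max_next uniform_U[OF this(1)]
        this(2,3) integrand[unfolded m]]
    show ?thesis
      unfolding m .
  qed
  finally show ?thesis .
qed

lemma prob_capped_records_eq_records_cdf:
  assumes "m \<in> S" "1 \<le> m" "t m \<le> 1"
  shows "\<P>(\<omega> in M. capped_records S t (\<lambda>i. U i \<omega>) m) = records_cdf S t m 2"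
proof -
  obtain n where m: "m = Suc n"
    using \<open>1 \<le> m\<close> by (cases m) auto
  have "prefix_max x m < 2" if "capped_records S t x m" for x
    using that assms unfolding m by (simp add: capped_records_Suc)
  then show ?thesis
    unfolding records_cdf_def by (intro arg_cong[where f = prob] Collect_cong) auto
qed

lemma prob_three_records:
  assumes jkr: "1 \<le> j" "j < k" "k < r" and abc: "0 < a" "a \<le> b" "b \<le> c" "c \<le> 1"
  shows "\<P>(\<omega> in M. capped_records {j, k, r} (\<lambda>m. if m = j then a else if m = k then b else c) (\<lambda>i. U i \<omega>) r)
     = three_records_prob j k r a b c"
proof -
  define t where "t m = (if m = j then a else if m = k then b else c)" for m
  let ?G = "records_cdf {j, k, r} t"
  have before_j: "?G (j - 1) v = v ^ (j - 1)" if "0 < v" "v \<le> 1" for v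
  proof -
    have "?G (j - 1) v = ?G 0 v * v ^ (j - 1 - 0)"
      by (rule records_cdf_not_records) (use that jkr in auto)
    then show ?thesis
      using records_cdf_0 that by simp
  qed
  have at_j: "?G j y = min a y ^ j / j" if "0 \<le> y" for y
  proof (rule records_cdf_record)
    show "((\<lambda>v. v ^ (j - 1)) has_integral min a y ^ j / j) {0..min (t j) y}"
      using has_integral_power_pred[of j 0 "min a y"] that jkr abc by (simp add: t_def zero_power)
  qed (use jkr abc before_j in \<open>auto simp: t_def\<close>)
  have before_k: "?G (k - 1) v = min a v ^ j / j * v ^ (k - 1 - j)" if "0 < v" "v \<le> 1" for v
  proof -
    have "?G (k - 1) v = ?G j v * v ^ (k - 1 - j)"
      by (rule records_cdf_not_records) (use that jkr in auto)
    then show ?thesis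
      using at_j that by simp
  qed
  have at_k: "?G k y = two_records_prob j k a (min b y)" if "0 \<le> y" for y
  proof (rule records_cdf_record)
    show "((\<lambda>v. min a v ^ j / j * v ^ (k - 1 - j)) has_integral two_records_prob j k a (min b y))
        {0..min (t k) y}"
      using has_integral_two_records_prob[of j k a "min b y"] that jkr abc by (simp add: t_def)
  qed (use jkr abc before_k in \<open>auto simp: t_def\<close>)
  have before_r: "?G (r - 1) v = two_records_prob j k a (min b v) * v ^ (r - 1 - k)" if "0 < v" "v \<le> 1" for v
  proof -
    have "?G (r - 1) v = ?G k v * v ^ (r - 1 - k)"
      by (rule records_cdf_not_records) (use that jkr in auto)
    then show ?thesis
      using at_k that by simp
  qed
  have "?G r 2 = three_records_prob j k r a b c"
  proof (rule records_cdf_record)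
    show "((\<lambda>v. two_records_prob j k a (min b v) * v ^ (r - 1 - k)) has_integral three_records_prob j k r a b c)
        {0..min (t r) 2}"
      using has_integral_three_records_prob[OF jkr abc(1-3)] jkr abc by (simp add: t_def min_absorb1)
  qed (use jkr abc before_r in \<open>auto simp: t_def\<close>)
  moreover have "t r \<le> 1"
    using jkr abc by (simp add: t_def)
  ultimately show ?thesis
    using prob_capped_records_eq_records_cdf[of r "{j, k, r}" t] jkr by (simp add: t_def [abs_def])
qed

end

lemma (in prob_space) iid_uniform_exp:
  fixes \<eta> :: "nat \<Rightarrow> 'a \<Rightarrow> real"
  assumes indep: "indep_vars (\<lambda>_. borel) \<eta> {1..}"
    and cdf: "\<And>i x. 1 \<le> i \<Longrightarrow> x \<le> 0 \<Longrightarrow> \<P>(\<omega> in M. \<eta> i \<omega> \<le> x) = exp x"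
  shows "iid_uniform M (\<lambda>i \<omega>. exp (\<eta> i \<omega>))"
proof unfold_locales
  show "indep_vars (\<lambda>_. borel) (\<lambda>i \<omega>. exp (\<eta> i \<omega>)) {1..}"
    using indep by (rule indep_vars_compose2) simp
  fix i :: nat
  assume "1 \<le> i"
  then have [measurable]: "\<eta> i \<in> borel_measurable M"
    using indep by (auto simp: indep_vars_def2)
  have "\<P>(\<omega> in M. exp (\<eta> i \<omega>) \<le> s) = s" if "0 \<le> s" "s \<le> 1" for s
  proof (cases "s = 0")
    case False
    then have "{\<omega> \<in> space M. exp (\<eta> i \<omega>) \<le> s} = {\<omega> \<in> space M. \<eta> i \<omega> \<le> ln s}"
      using that by (auto simp: ln_ge_iff)
    then show ?thesis
      using cdf[OF \<open>1 \<le> i\<close>, of "ln s"] that False by simp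
  qed (simp add: not_le)
  then show "distributed M lborel (\<lambda>\<omega>. exp (\<eta> i \<omega>)) (indicator {0..1})"
    using uniform_distrI_borel_atLeastAtMost[of "\<lambda>\<omega>. exp (\<eta> i \<omega>)" 0 1] by (simp add: ennreal_indicator)
qed

lemma is_record_iff_prefix_max:
  assumes "1 \<le> m"
  shows "is_record \<eta> m \<omega> \<longleftrightarrow> prefix_max (\<lambda>i. exp (\<eta> i \<omega>)) (m - 1) < exp (\<eta> m \<omega>)"
proof -
  have "{1..<m} = {1..m - 1}"
    using assms by auto
  then show ?thesis
    by (simp add: is_record_def prefix_max_less_iff)
qed

lemma pred_is_record:
  "(\<And>i. 1 \<le> i \<Longrightarrow> i \<le> m \<Longrightarrow> \<eta> i \<in> borel_measurable N) \<Longrightarrow> Measurable.pred N (is_record \<eta> m)"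
  unfolding is_record_def by measurable auto

lemma prob_exp_records_below:
  assumes "iid_uniform M (\<lambda>i \<omega>. exp (\<eta> i \<omega>))"
    and jkr: "1 \<le> j" "j < k" "k < r" and "x1 \<le> x2" "x2 \<le> x3" "x3 \<le> 0"
  shows "\<P>(\<omega> in M. (\<eta> j \<omega> \<le> x1 \<and> \<eta> k \<omega> \<le> x2 \<and> \<eta> r \<omega> \<le> x3)
            \<and> is_record \<eta> j \<omega> \<and> is_record \<eta> k \<omega> \<and> is_record \<eta> r \<omega>)
    = three_records_prob j k r (exp x1) (exp x2) (exp x3)"
proof -
  interpret iid_uniform M "\<lambda>i \<omega>. exp (\<eta> i \<omega>)" by fact
  let ?t = "\<lambda>m. if m = j then exp x1 else if m = k then exp x2 else exp x3"
  have "((\<eta> j \<omega> \<le> x1 \<and> \<eta> k \<omega> \<le> x2 \<and> \<eta> r \<omega> \<le> x3)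
            \<and> is_record \<eta> j \<omega> \<and> is_record \<eta> k \<omega> \<and> is_record \<eta> r \<omega>)
      \<longleftrightarrow> capped_records {j, k, r} ?t (\<lambda>i. exp (\<eta> i \<omega>)) r" for \<omega>
    using jkr by (subst capped_records_iff) (auto simp: is_record_iff_prefix_max)
  then show ?thesis
    using prob_three_records[OF jkr, of "exp x1" "exp x2" "exp x3"] assms by simp
qed

theorem mainTheorem12:
  fixes M :: "'a measure" and \<eta> :: "nat \<Rightarrow> 'a \<Rightarrow> real"
    and j k r :: nat and x1 x2 x3 :: real
  assumes "prob_space M"
    and rv: "\<And>i. i \<ge> 1 \<Longrightarrow> \<eta> i \<in> borel_measurable M"
    and indep: "prob_space.indep_vars M (\<lambda>_. borel) \<eta> {1..}"
    and cdf: "\<And>i x. i \<ge> 1 \<Longrightarrow> x \<le> 0 \<Longrightarrow> measure M {\<omega> \<in> space M. \<eta> i \<omega> \<le> x} = exp x"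
    and "1 \<le> j" "j < k" "k < r"
    and "x1 < x2" "x2 < x3" "x3 \<le> 0"
  shows "\<P>(\<omega> in M. \<eta> j \<omega> \<le> x1 \<and> \<eta> k \<omega> \<le> x2 \<and> \<eta> r \<omega> \<le> x3
            \<bar> is_record \<eta> j \<omega> \<and> is_record \<eta> k \<omega> \<and> is_record \<eta> r \<omega>)
    = real k * real r / (real (k - j) * real (r - k)) *
      (exp (real j * x1) * (exp (real (r - k) * x3) * exp (real (k - j) * x2)
            - real (k - j) / real (r - j) * exp (real (r - j) * x2))
       - real j / real k * exp (real k * x1) * exp (real (r - k) * x3)
       + real j * real (k - j) / (real r * real (r - j)) * exp (real r * x1))"
proof -
  interpret prob_space M by fact
  have uniform: "iid_uniform M (\<lambda>i \<omega>. exp (\<eta> i \<omega>))"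
    using indep cdf by (rule iid_uniform_exp)
  have [measurable]: "Measurable.pred M (is_record \<eta> m)" "\<eta> m \<in> borel_measurable M" if "1 \<le> m" for m
    using that rv by (auto intro!: pred_is_record)
  have nonpos: "AE \<omega> in M. \<eta> m \<omega> \<le> 0" if "1 \<le> m" for m
    using AE_prob_1[of "{\<omega> \<in> space M. \<eta> m \<omega> \<le> 0}"] cdf[OF that, of 0] by simp
  have "\<P>(\<omega> in M. is_record \<eta> j \<omega> \<and> is_record \<eta> k \<omega> \<and> is_record \<eta> r \<omega>)
      = \<P>(\<omega> in M. (\<eta> j \<omega> \<le> 0 \<and> \<eta> k \<omega> \<le> 0 \<and> \<eta> r \<omega> \<le> 0)
            \<and> is_record \<eta> j \<omega> \<and> is_record \<eta> k \<omega> \<and> is_record \<eta> r \<omega>)"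
    using nonpos[of j] nonpos[of k] nonpos[of r] assms
    by (intro prob_eq_AE) (auto elim!: eventually_rev_mp)
  then show ?thesis
    unfolding cond_prob_def exp_of_nat_mult
    using prob_exp_records_below[OF uniform, of j k r x1 x2 x3] prob_exp_records_below[OF uniform, of j k r 0 0 0]
      three_records_prob_ratio[of j k r "exp x1" "exp x2" "exp x3"] assms
    by simp
qed

end
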